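(* For all integers $q\ge1$ and $t\ge0$, $\mathsf{DEL}_{\mathrm{cor}}(q,2t)\le \mathsf{INDEL}_{\mathrm{cor}}(q,t)\le \mathsf{DEL}_{\mathrm{cor}}(q,t).$
   Context: Let $[q]=\{0,1,\dots,q-1\}$. For $1\le m\le q$, a partial permutation of length $m$ over $[q]$ is a sequence $\pi=(\pi_1,\dots,\pi_m)$ of $m$ pairwise distinct elements of $[q]$. Let $\mathcal{S}_m^q$ be the set of those of length $m$ and $\mathcal{S}_{\mathrm{all}}^q=\bigcup_{m=1}^{q}\mathcal{S}_m^q$. A code is any subset of $\mathcal{S}_{\mathrm{all}}^q$. For $\pi$ of length $m$ and integer $j\ge 0$, $\pi_{\downarrow j}=(\pi_{k+1},\dots,\pi_m)$ with $k=\min(j,m-1)$; $\mathcal{B}_{\mathrm{del}}^t(\pi)=\{\pi_{\downarrow j}:0\le j\le t\}$. $\mathcal{B}_{\mathrm{indel}}^t(\pi)$ is the set of all partial permutations obtainable from $\pi$ by at most $t$ operations, each either a single tail deletion (removing the first symbol of a partial permutation of length at least $2$) or a single tail insertion (prepending an element of $[q]$ not already occurring). For $X\in\{\mathrm{del},\mathrm{indel}\}$, a code $\mathcal{C}$ is $t$-tail-$X$-correcting if $\mathcal{B}_X^t(\pi_1)\cap\mathcal{B}_X^t(\pi_2)=\emptyset$ for all distinct $\pi_1,\pi_2\in\mathcal{C}$. $\mathsf{DEL}_{\mathrm{cor}}(q,t)$ and $\mathsf{INDEL}_{\mathrm{cor}}(q,t)$ denote the maximum sizes of $t$-tail-deletion-correcting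 and $t$-tail-indel-correcting codes in $\mathcal{S}_{\mathrm{all}}^q$. *)

theory Defs
  imports Main
begin

text \<open>Partial permutations over [q] = {0..<q} are represented as lists.\<close>

definition pperm :: "nat \<Rightarrow> nat list \<Rightarrow> bool" where
  "pperm q \<pi> \<longleftrightarrow> distinct \<pi> \<and> set \<pi> \<subseteq> {..<q} \<and> 1 \<le> length \<pi> \<and> length \<pi> \<le> q"

definition S_all :: "nat \<Rightarrow> nat list set" where
  "S_all q = {\<pi>. pperm q \<pi>}"

definition tail_del :: "nat list \<Rightarrow> nat \<Rightarrow> nat list" where
  "tail_del \<pi> j = drop (min j (length \<pi> - 1)) \<pi>"

definition del_ball :: "nat \<Rightarrow> nat list \<Rightarrow> nat list set" where
  "del_ball t \<pi> = {tail_del \<pi> j | j. j \<le> t}"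

definition indel_step :: "nat \<Rightarrow> nat list \<Rightarrow> nat list \<Rightarrow> bool" where
  "indel_step q \<pi> \<sigma> \<longleftrightarrow>
     (2 \<le> length \<pi> \<and> \<sigma> = tl \<pi>) \<or> (\<exists>a. a < q \<and> a \<notin> set \<pi> \<and> \<sigma> = a # \<pi>)"

definition indel_ball :: "nat \<Rightarrow> nat \<Rightarrow> nat list \<Rightarrow> nat list set" where
  "indel_ball q t \<pi> = {\<sigma>. \<exists>k\<le>t. (indel_step q ^^ k) \<pi> \<sigma>}"

definition del_correcting :: "nat \<Rightarrow> nat \<Rightarrow> nat list set \<Rightarrow> bool" where
  "del_correcting q t C \<longleftrightarrow> C \<subseteq> S_all q \<and>
     (\<forall>\<pi>1\<in>C. \<forall>\<pi>2\<in>C. \<pi>1 \<noteq> \<pi>2 \<longrightarrow> del_ball t \<pi>1 \<inter> del_ball t \<pi>2 = {})"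

definition indel_correcting :: "nat \<Rightarrow> nat \<Rightarrow> nat list set \<Rightarrow> bool" where
  "indel_correcting q t C \<longleftrightarrow> C \<subseteq> S_all q \<and>
     (\<forall>\<pi>1\<in>C. \<forall>\<pi>2\<in>C. \<pi>1 \<noteq> \<pi>2 \<longrightarrow> indel_ball q t \<pi>1 \<inter> indel_ball q t \<pi>2 = {})"

definition DEL_cor :: "nat \<Rightarrow> nat \<Rightarrow> nat" where
  "DEL_cor q t = Max (card ` {C. del_correcting q t C})"

definition INDEL_cor :: "nat \<Rightarrow> nat \<Rightarrow> nat" where
  "INDEL_cor q t = Max (card ` {C. indel_correcting q t C})"

end

theory Submission
  imports Defs
begin

text \<open>
  A tail-deletion ball is contained in the tail-indel ball of the same radius, so every
  t-tail-indel-correcting code is t-tail-deletion-correcting.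
  Conversely, since all operations act at the front, a word \<sigma> reached from \<pi> by at most t of
  them satisfies \<open>drop l \<sigma> = drop d \<pi>\<close> with \<open>d + l \<le> t\<close>: the surviving suffix of \<pi> follows l
  inserted symbols. If \<sigma> is reached from both \<pi>1 and \<pi>2, the shorter of the two surviving
  suffixes is obtained from each \<pi>i by at most 2t tail deletions, so the 2t-deletion balls of
  \<pi>1 and \<pi>2 meet.
\<close>

lemma finite_S_all: "finite (S_all q)"
proof (rule finite_subset)
  show "S_all q \<subseteq> {xs. set xs \<subseteq> {..<q} \<and> length xs \<le> q}"
    by (auto simp: S_all_def pperm_def)
  show "finite {xs. set xs \<subseteq> {..<q} \<and> length xs \<le> q}"
    by (rule finite_lists_length_le) simp
qed

lemma finite_del_correcting: "finite {C. del_correcting q t C}"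
  by (rule finite_subset[of _ "Pow (S_all q)"]) (auto simp: del_correcting_def finite_S_all)

lemma finite_indel_correcting: "finite {C. indel_correcting q t C}"
  by (rule finite_subset[of _ "Pow (S_all q)"]) (auto simp: indel_correcting_def finite_S_all)

lemma Max_card_mono:
  assumes "P \<le> Q" and "P C" and "finite (Collect Q)"
  shows "Max (card ` Collect P) \<le> Max (card ` Collect Q)"
  using assms by (intro Max_mono image_mono) auto

lemma drop_in_del_ball:
  assumes "j \<le> t" and "j < length \<pi>"
  shows "drop j \<pi> \<in> del_ball t \<pi>"
  using assms unfolding del_ball_def tail_del_def by (intro CollectI exI[of _ j]) auto

lemma indel_steps_drop:
  assumes "j < length \<pi>"
  shows "(indel_step q ^^ j) \<pi> (drop j \<pi>)"
  using assms
proof (induction j)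
  case 0
  then show ?case by simp
next
  case (Suc j)
  then have "indel_step q (drop j \<pi>) (drop (Suc j) \<pi>)"
    by (auto simp: indel_step_def drop_Suc tl_drop)
  with Suc show ?case by auto
qed

lemma del_ball_subset_indel_ball: "del_ball t \<pi> \<subseteq> indel_ball q t \<pi>"
proof
  fix \<sigma> assume "\<sigma> \<in> del_ball t \<pi>"
  then obtain j where "j \<le> t" and \<sigma>: "\<sigma> = tail_del \<pi> j"
    by (auto simp: del_ball_def)
  define k where "k = min j (length \<pi> - 1)"
  show "\<sigma> \<in> indel_ball q t \<pi>"
  proof (cases "\<pi> = []")
    case True
    then show ?thesis
      using \<sigma> by (auto simp: tail_del_def indel_ball_def intro: exI[of _ 0])
  next
    case False
    then have "k < length \<pi>"
      by (simp add: k_def min_less_iff_disj)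
    then have "(indel_step q ^^ k) \<pi> \<sigma>"
      using indel_steps_drop[of k \<pi> q] by (simp add: \<sigma> tail_del_def k_def)
    moreover have "k \<le> t"
      using \<open>j \<le> t\<close> by (simp add: k_def)
    ultimately show ?thesis
      unfolding indel_ball_def by blast
  qed
qed

lemma indel_steps_common_suffix:
  assumes "(indel_step q ^^ k) \<pi> \<sigma>" and "\<pi> \<noteq> []"
  shows "\<exists>d l. d + l \<le> k \<and> d < length \<pi> \<and> drop l \<sigma> = drop d \<pi>"
  using assms(1)
proof (induction k arbitrary: \<sigma>)
  case 0
  then show ?case
    using assms(2) by (auto intro!: exI[of _ 0])
next
  case (Suc k)
  then obtain \<rho> where "(indel_step q ^^ k) \<pi> \<rho>" and step: "indel_step q \<rho> \<sigma>"
    by auto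
  then obtain d l where dl: "d + l \<le> k" "d < length \<pi>" and \<rho>: "drop l \<rho> = drop d \<pi>"
    using Suc.IH by blast
  from step consider "2 \<le> length \<rho>" "\<sigma> = tl \<rho>" | a where "\<sigma> = a # \<rho>"
    unfolding indel_step_def by blast
  then show ?case
  proof cases
    case 1
    show ?thesis
    proof (cases l)
      case 0
      \<comment> \<open>no inserted symbol is left, so the deletion removes one more symbol of \<pi>\<close>
      then have "Suc d < length \<pi>" and "drop 0 \<sigma> = drop (Suc d) \<pi>"
        using 1 \<rho> by (simp_all add: drop_Suc tl_drop)
      then show ?thesis
        using dl 0 by (intro exI[of _ "Suc d"] exI[of _ 0]) auto
    next
      case (Suc l')
      then have "drop l' \<sigma> = drop d \<pi>"
        using 1 \<rho> by (simp add: drop_Suc tl_drop)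
      then show ?thesis
        using dl Suc by (intro exI[of _ d] exI[of _ l']) auto
    qed
  next
    case 2
    then have "drop (Suc l) \<sigma> = drop d \<pi>"
      using \<rho> by simp
    then show ?thesis
      using dl by (intro exI[of _ d] exI[of _ "Suc l"]) auto
  qed
qed

lemma common_suffix_in_del_balls:
  assumes "drop l1 \<sigma> = drop d1 \<pi>1" "d1 + l1 \<le> t" "d1 < length \<pi>1"
    and "drop l2 \<sigma> = drop d2 \<pi>2" "d2 + l2 \<le> t"
    and "l2 \<le> l1"
  shows "drop d1 \<pi>1 \<in> del_ball (2 * t) \<pi>1 \<inter> del_ball (2 * t) \<pi>2"
proof -
  have "drop d1 \<pi>1 = drop (l1 - l2) (drop l2 \<sigma>)"
    using assms(1,6) by simp
  also have "\<dots> = drop (l1 - l2 + d2) \<pi>2"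
    using assms(4) by simp
  finally have suffix: "drop d1 \<pi>1 = drop (l1 - l2 + d2) \<pi>2" .
  moreover have "drop d1 \<pi>1 \<noteq> []"
    using assms(3) by simp
  ultimately have "l1 - l2 + d2 < length \<pi>2"
    by (metis drop_all not_le)
  then have "drop (l1 - l2 + d2) \<pi>2 \<in> del_ball (2 * t) \<pi>2"
    using assms(2,5) by (intro drop_in_del_ball) auto
  moreover have "drop d1 \<pi>1 \<in> del_ball (2 * t) \<pi>1"
    using assms(2,3) by (intro drop_in_del_ball) auto
  ultimately show ?thesis
    using suffix by simp
qed

lemma indel_balls_meet_imp_del_balls_meet:
  assumes "indel_ball q t \<pi>1 \<inter> indel_ball q t \<pi>2 \<noteq> {}" and "\<pi>1 \<noteq> []" and "\<pi>2 \<noteq> []"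
  shows "del_ball (2 * t) \<pi>1 \<inter> del_ball (2 * t) \<pi>2 \<noteq> {}"
proof -
  obtain \<sigma> k1 k2 where "k1 \<le> t" "(indel_step q ^^ k1) \<pi>1 \<sigma>"
    and "k2 \<le> t" "(indel_step q ^^ k2) \<pi>2 \<sigma>"
    using assms(1) by (auto simp: indel_ball_def)
  obtain d1 l1 where 1: "drop l1 \<sigma> = drop d1 \<pi>1" "d1 + l1 \<le> t" "d1 < length \<pi>1"
    using indel_steps_common_suffix[OF \<open>(indel_step q ^^ k1) \<pi>1 \<sigma>\<close> assms(2)] \<open>k1 \<le> t\<close>
    by (auto intro: le_trans)
  obtain d2 l2 where 2: "drop l2 \<sigma> = drop d2 \<pi>2" "d2 + l2 \<le> t" "d2 < length \<pi>2"
    using indel_steps_common_suffix[OF \<open>(indel_step q ^^ k2) \<pi>2 \<sigma>\<close> assms(3)] \<open>k2 \<le> t\<close>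
    by (auto intro: le_trans)
  show ?thesis
  proof (cases "l2 \<le> l1")
    case True
    from common_suffix_in_del_balls[OF 1 2(1,2) True] show ?thesis by blast
  next
    case False
    then have "l1 \<le> l2" by simp
    from common_suffix_in_del_balls[OF 2 1(1,2) this] show ?thesis by blast
  qed
qed

lemma del_correcting_double_imp_indel_correcting:
  assumes "del_correcting q (2 * t) C"
  shows "indel_correcting q t C"
proof -
  have "C \<subseteq> S_all q"
    using assms by (simp add: del_correcting_def)
  then have "\<pi> \<noteq> []" if "\<pi> \<in> C" for \<pi>
    using that by (auto simp: S_all_def pperm_def)
  with assms show ?thesis
    unfolding del_correcting_def indel_correcting_def
    by (metis indel_balls_meet_imp_del_balls_meet)
qed

lemma indel_correcting_imp_del_correcting:
  assumes "indel_correcting q t C"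
  shows "del_correcting q t C"
  using assms del_ball_subset_indel_ball[of t _ q]
  unfolding indel_correcting_def del_correcting_def by blast

theorem mainTheorem7:
  fixes q t :: nat
  assumes "1 \<le> q"
  shows "DEL_cor q (2 * t) \<le> INDEL_cor q t \<and> INDEL_cor q t \<le> DEL_cor q t"
proof
  show "DEL_cor q (2 * t) \<le> INDEL_cor q t"
    unfolding DEL_cor_def INDEL_cor_def
    using del_correcting_double_imp_indel_correcting finite_indel_correcting
    by (intro Max_card_mono[where C = "{}"]) (auto simp: del_correcting_def)
  show "INDEL_cor q t \<le> DEL_cor q t"
    unfolding DEL_cor_def INDEL_cor_def
    using indel_correcting_imp_del_correcting finite_del_correcting
    by (intro Max_card_mono[where C = "{}"]) (auto simp: indel_correcting_def)
qed

end
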